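(* Let $(X,d)$ be a metric space and $\ell:X\to[0,+\infty]$ a lower semicontinuous function satisfying hypothesis $(H_0)$. Then there is a lower semicontinuous function $u:X\to\mathbb{R}\cup\{+\infty\}$ with $\inf_Xu=0$ and $G[u](x)=\ell(x)$ for all $x\in X$.
   Context: Global slope: for $u:X\to\mathbb{R}\cup\{+\infty\}$, $G[u](x)=\sup_{y\neq x}\frac{(u(x)-u(y))_+}{d(x,y)}$ if $u(x)<+\infty$ and $G[u](x)=+\infty$ otherwise ($\alpha_+=\max\{\alpha,0\}$). Hypothesis $(H_0)$: there is a sequence $\{\bar x_n\}_n\subset X$ with $\sum_{n=0}^\infty\ell(\bar x_n)d(\bar x_n,\bar x_{n+1})<+\infty$ and $\lim_{n\to\infty}\ell(\bar x_n)=0$. *)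

theory Defs
  imports "HOL-Analysis.Analysis"
begin

definition lsc :: "('a::topological_space \<Rightarrow> ereal) \<Rightarrow> bool" where
  "lsc f \<longleftrightarrow> (\<forall>t. open {x. t < f x})"

text \<open>The supremum is taken over the nonnegative quantities
  (u x - u y)_+ / d(x,y), y \<noteq> x; we include 0 so that the supremum over an empty
  index set (one-point space) is 0 rather than -\<infinity>.\<close>
definition global_slope :: "('a::metric_space \<Rightarrow> ereal) \<Rightarrow> 'a \<Rightarrow> ereal" where
  "global_slope u x =
     (if u x < \<infinity>
      then Sup ({0} \<union> {max (u x - u y) 0 / ereal (dist x y) | y. y \<noteq> x})
      else \<infinity>)"

definition H0 :: "('a::metric_space \<Rightarrow> ereal) \<Rightarrow> bool" where
  "H0 l \<longleftrightarrow> (\<exists>xb :: nat \<Rightarrow> 'a.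
      (\<Sum>n. l (xb n) * ereal (dist (xb n) (xb (Suc n)))) < \<infinity> \<and>
      (\<lambda>n. l (xb n)) \<longlonglongrightarrow> 0)"

end

theory Submission
  imports Defs
begin

text \<open>
  The function u is the lower semicontinuous envelope v of the minimal cost
  min_cost x = inf \<Sum> l(x_n) d(x_n, x_(n+1)) over sequences starting at x along which l tends to 0.
  Tails of the sequence from (H0) give inf min_cost = 0, and prepending a point gives
  min_cost x \<le> l x d(x,y) + min_cost y, so min_cost is finite where l is; this inequality
  survives the passage to v and bounds the slope of v by l.  Conversely, for b < M < l x,
  lower semicontinuity of l yields a ball around x on which l > M; an almost optimal
  sequence starting near x must leave this ball, because l tends to 0 along it, and
  paying at least M per unit length on the way out produces a point z with
  v x - v z \<ge> b d(x,z).
\<close>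

lemma suminf_ereal_split_initial_segment:
  fixes f :: "nat \<Rightarrow> ereal"
  assumes "\<And>n. 0 \<le> f n"
  shows "suminf f = (\<Sum>n. f (n + k)) + (\<Sum>n<k. f n)"
proof -
  define g where "g n = e2ennreal (f n)" for n
  have f_eq: "f = (\<lambda>n. enn2ereal (g n))"
    using assms by (simp add: g_def enn2ereal_e2ennreal)
  have "suminf g = (\<Sum>n. g (n + k)) + (\<Sum>n<k. g n)"
    by (rule suminf_offset) (rule summableI)
  then show ?thesis
    unfolding f_eq by (simp add: plus_ennreal.rep_eq)
qed

lemma suminf_ereal_tail_LIMSEQ_zero:
  fixes f :: "nat \<Rightarrow> ereal"
  assumes "\<And>n. 0 \<le> f n" and "suminf f \<noteq> \<infinity>"
  shows "(\<lambda>k. \<Sum>n. f (n + k)) \<longlonglongrightarrow> 0"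
proof -
  obtain g where f_eq: "f = (\<lambda>n. ereal (g n))"
    using suminf_PInfty_fun[OF assms] by blast
  have "summable g"
    using assms unfolding f_eq by (intro summable_ereal) auto
  then have "(\<lambda>k. ereal (\<Sum>n. g (n + k))) \<longlonglongrightarrow> ereal 0"
    by (intro tendsto_ereal suminf_exist_split2)
  then show ?thesis
    unfolding f_eq using suminf_ereal'[OF summable_ignore_initial_segment[OF \<open>summable g\<close>]]
    by (simp add: zero_ereal_def)
qed

definition lsc_hull :: "('a::metric_space \<Rightarrow> 'b::complete_lattice) \<Rightarrow> 'a \<Rightarrow> 'b" where
  "lsc_hull f x = (SUP r\<in>{0<..}. INF y\<in>ball x r. f y)"

lemma INF_ball_le_lsc_hull: "0 < r \<Longrightarrow> (INF y\<in>ball x r. f y) \<le> lsc_hull f x"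
  unfolding lsc_hull_def by (rule SUP_upper) simp

lemma lsc_hull_le: "lsc_hull f x \<le> f x"
  unfolding lsc_hull_def by (rule SUP_least) (auto intro: INF_lower)

lemma lsc_hull_greatest:
  assumes "\<And>y. c \<le> f y"
  shows "c \<le> lsc_hull f x"
proof -
  have "c \<le> (INF y\<in>ball x 1. f y)"
    using assms by (rule INF_greatest)
  also have "\<dots> \<le> lsc_hull f x"
    by (rule INF_ball_le_lsc_hull) simp
  finally show ?thesis .
qed

lemma INF_lsc_hull: "(INF x. lsc_hull f x) = (INF x. f x)"
proof (rule antisym)
  show "(INF x. lsc_hull f x) \<le> (INF x. f x)"
    by (rule INF_mono) (use lsc_hull_le in blast)
  show "(INF x. f x) \<le> (INF x. lsc_hull f x)"
    by (intro INF_greatest lsc_hull_greatest INF_lower) simp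
qed

lemma lsc_lsc_hull: "lsc (lsc_hull (f :: 'a::metric_space \<Rightarrow> ereal))"
  unfolding lsc_def open_contains_ball
proof (intro allI ballI)
  fix t x assume "x \<in> {x. t < lsc_hull f x}"
  then obtain r where r: "0 < r" "t < (INF y\<in>ball x r. f y)"
    unfolding lsc_hull_def less_SUP_iff by auto
  have "t < lsc_hull f x'" if "x' \<in> ball x r" for x'
  proof -
    have r': "0 < r - dist x x'" using that by simp
    have "ball x' (r - dist x x') \<subseteq> ball x r"
    proof
      fix z assume "z \<in> ball x' (r - dist x x')"
      then show "z \<in> ball x r" using dist_triangle[of x z x'] by simp
    qed
    then have "(INF y\<in>ball x r. f y) \<le> (INF y\<in>ball x' (r - dist x x'). f y)"
      by (rule INF_superset_mono) simp
    also have "\<dots> \<le> lsc_hull f x'"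
      by (rule INF_ball_le_lsc_hull[OF r'])
    finally show ?thesis using r(2) by simp
  qed
  then show "\<exists>e>0. ball x e \<subseteq> {x. t < lsc_hull f x}" using r(1) by blast
qed

lemma continuous_minorant_le_lsc_hull:
  fixes f :: "'a::metric_space \<Rightarrow> ereal"
  assumes "isCont g x" and "\<And>y. ereal (g y) \<le> f y"
  shows "ereal (g x) \<le> lsc_hull f x"
proof (rule ereal_le_epsilon2)
  fix e :: real assume "0 < e"
  have "\<forall>\<^sub>F y in nhds x. g x - e < g y"
    using assms(1) \<open>0 < e\<close> unfolding isCont_def tendsto_at_iff_tendsto_nhds
    by (intro order_tendstoD(1)) auto
  then obtain r where "0 < r" and r: "\<And>y. dist y x < r \<Longrightarrow> g x - e < g y"
    unfolding eventually_nhds_metric by blast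
  have "ereal (g x - e) \<le> (INF y\<in>ball x r. f y)"
  proof (rule INF_greatest)
    fix y assume "y \<in> ball x r"
    then have "ereal (g x - e) \<le> ereal (g y)" using r[of y] by (simp add: dist_commute)
    then show "ereal (g x - e) \<le> f y" using assms(2) order_trans by blast
  qed
  also have "\<dots> \<le> lsc_hull f x" by (rule INF_ball_le_lsc_hull[OF \<open>0 < r\<close>])
  finally show "ereal (g x) \<le> lsc_hull f x + ereal e"
    using ereal_minus_le[of "ereal e" "ereal (g x)"] by simp
qed

lemma slope_quotient_le:
  fixes X :: real and v c :: ereal
  assumes "0 < d" "0 \<le> c" "v \<noteq> -\<infinity>" "ereal X \<le> c * ereal d + v"
  shows "max (ereal X - v) 0 / ereal d \<le> c"
proof (cases v)
  case (real Y)
  show ?thesis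
  proof (cases c)
    case (real C)
    with assms \<open>v = ereal Y\<close> have "max (X - Y) 0 / d \<le> C"
      by (simp add: divide_le_eq mult.commute)
    then show ?thesis using \<open>v = ereal Y\<close> real assms(1,2) by (auto simp: max_def split: if_splits)
  qed (use assms in auto)
qed (use assms in auto)

lemma slope_quotient_ge:
  fixes X b :: real and v :: ereal
  assumes "0 < d" "ereal (b * d) + v \<le> ereal X"
  shows "ereal b \<le> max (ereal X - v) 0 / ereal d"
proof (cases v)
  case (real Y)
  with assms have "b \<le> max (X - Y) 0 / d"
    by (simp add: le_divide_eq)
  then show ?thesis using real assms(1) by (auto simp: max_def split: if_splits)
qed (use assms in auto)

lemma global_slope_eqI:
  fixes u :: "'a::metric_space \<Rightarrow> ereal"
  assumes ux: "u x = ereal X" and "0 \<le> c" and u_not_MInf: "\<And>y. u y \<noteq> -\<infinity>"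
    and upper: "\<And>y. u x \<le> c * ereal (dist x y) + u y"
    and lower: "\<And>b. 0 < b \<Longrightarrow> ereal b < c \<Longrightarrow> \<exists>z. z \<noteq> x \<and> ereal (b * dist x z) + u z \<le> u x"
  shows "global_slope u x = c"
proof -
  let ?S = "{0} \<union> {max (u x - u y) 0 / ereal (dist x y) | y. y \<noteq> x}"
  have "Sup ?S = c"
  proof (rule antisym)
    show "Sup ?S \<le> c"
    proof (rule Sup_least)
      fix t assume "t \<in> ?S"
      then consider "t = 0" | y where "y \<noteq> x" "t = max (u x - u y) 0 / ereal (dist x y)"
        by blast
      then show "t \<le> c"
      proof cases
        case (2 y)
        then show ?thesis
          using slope_quotient_le[of "dist x y" c "u y" X] upper[of y] ux u_not_MInf \<open>0 \<le> c\<close>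
          by simp
      qed (use \<open>0 \<le> c\<close> in simp)
    qed
    show "c \<le> Sup ?S"
    proof (rule dense_le)
      fix b assume "b < c"
      show "b \<le> Sup ?S"
      proof (cases "b \<le> 0")
        case True
        then show ?thesis by (meson Sup_upper UnI1 insertI1 order_trans)
      next
        case False
        then obtain b' where b': "b = ereal b'" "0 < b'"
          using \<open>b < c\<close> by (cases b) auto
        then obtain z where "z \<noteq> x" and z: "ereal (b' * dist x z) + u z \<le> u x"
          using lower \<open>b < c\<close> by blast
        have "b \<le> max (u x - u z) 0 / ereal (dist x z)"
          using slope_quotient_ge[of "dist x z" b' "u z" X] z b' ux \<open>z \<noteq> x\<close> by simp
        then show ?thesis using \<open>z \<noteq> x\<close> by (intro Sup_upper2) auto
      qed
    qed
  qed
  then show ?thesis using ux by (simp add: global_slope_def)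
qed

locale nonneg_weight =
  fixes l :: "'a::metric_space \<Rightarrow> ereal"
  assumes l_nonneg: "0 \<le> l x"
begin

definition step_cost :: "(nat \<Rightarrow> 'a) \<Rightarrow> nat \<Rightarrow> ereal" where
  "step_cost s n = l (s n) * ereal (dist (s n) (s (Suc n)))"

definition chain_cost :: "(nat \<Rightarrow> 'a) \<Rightarrow> ereal" where
  "chain_cost s = (\<Sum>n. step_cost s n)"

definition admissible_chains :: "'a \<Rightarrow> (nat \<Rightarrow> 'a) set" where
  "admissible_chains x = {s. s 0 = x \<and> (\<lambda>n. l (s n)) \<longlonglongrightarrow> 0}"

definition min_cost :: "'a \<Rightarrow> ereal" where
  "min_cost x = (INF s\<in>admissible_chains x. chain_cost s)"

lemma step_cost_nonneg: "0 \<le> step_cost s n"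
  unfolding step_cost_def using l_nonneg by simp

lemma chain_cost_nonneg: "0 \<le> chain_cost s"
  unfolding chain_cost_def by (rule suminf_0_le) (rule step_cost_nonneg)

lemma min_cost_nonneg: "0 \<le> min_cost x"
  unfolding min_cost_def by (rule INF_greatest) (rule chain_cost_nonneg)

lemma chain_cost_split:
  "chain_cost s = chain_cost (\<lambda>n. s (n + k)) + (\<Sum>n<k. step_cost s n)"
proof -
  have "(\<lambda>n. step_cost s (n + k)) = step_cost (\<lambda>n. s (n + k))"
    by (simp add: step_cost_def fun_eq_iff)
  then show ?thesis
    unfolding chain_cost_def using suminf_ereal_split_initial_segment[of "step_cost s" k, OF step_cost_nonneg]
    by simp
qed

lemma admissible_chains_shift:
  "s \<in> admissible_chains x \<Longrightarrow> (\<lambda>n. s (n + k)) \<in> admissible_chains (s k)"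
  unfolding admissible_chains_def using LIMSEQ_ignore_initial_segment[of "\<lambda>n. l (s n)" 0 k] by auto

lemma admissible_chains_case_nat:
  "s \<in> admissible_chains y \<Longrightarrow> case_nat x s \<in> admissible_chains x"
  unfolding admissible_chains_def using filterlim_sequentially_Suc[of "\<lambda>n. l (case_nat x s n)"] by simp

lemma chain_cost_case_nat:
  "s \<in> admissible_chains y \<Longrightarrow> chain_cost (case_nat x s) = l x * ereal (dist x y) + chain_cost s"
  using chain_cost_split[of "case_nat x s" 1]
  by (simp add: admissible_chains_def step_cost_def add.commute)

lemma min_cost_le_chain_cost: "s \<in> admissible_chains x \<Longrightarrow> min_cost x \<le> chain_cost s"
  unfolding min_cost_def by (rule INF_lower)

lemma prefix_cost_add_min_cost_le:
  assumes "s \<in> admissible_chains x"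
  shows "(\<Sum>n<k. step_cost s n) + min_cost (s k) \<le> chain_cost s"
proof -
  have "(\<Sum>n<k. step_cost s n) + min_cost (s k) \<le> (\<Sum>n<k. step_cost s n) + chain_cost (\<lambda>n. s (n + k))"
    by (intro add_left_mono min_cost_le_chain_cost admissible_chains_shift[OF assms])
  then show ?thesis
    using chain_cost_split[of s k] by (simp add: add.commute)
qed

lemma min_cost_triangle: "min_cost x \<le> l x * ereal (dist x y) + min_cost y"
proof (cases "admissible_chains y = {}")
  case True
  then show ?thesis using l_nonneg[of x] by (simp add: min_cost_def top_ereal_def)
next
  case False
  have "min_cost x \<le> (INF s\<in>admissible_chains y. l x * ereal (dist x y) + chain_cost s)"
    by (rule INF_greatest) (metis min_cost_le_chain_cost admissible_chains_case_nat chain_cost_case_nat)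
  also have "\<dots> = l x * ereal (dist x y) + min_cost y"
    unfolding min_cost_def using False l_nonneg[of x]
    by (intro INF_ereal_add_right) (auto intro: chain_cost_nonneg)
  finally show ?thesis .
qed

lemma prefix_cost_ge_dist:
  assumes "0 \<le> a" and "\<And>i. i < k \<Longrightarrow> ereal a \<le> l (s i)"
  shows "ereal (a * dist (s 0) (s k)) \<le> (\<Sum>n<k. step_cost s n)"
  using assms(2)
proof (induction k)
  case (Suc k)
  have "ereal (a * dist (s 0) (s (Suc k)))
          \<le> ereal (a * dist (s 0) (s k)) + ereal a * ereal (dist (s k) (s (Suc k)))"
    using mult_left_mono[OF dist_triangle[of "s 0" "s (Suc k)" "s k"] assms(1)]
    by (simp add: distrib_left)
  also have "\<dots> \<le> (\<Sum>n<k. step_cost s n) + step_cost s k"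
  proof (rule add_mono)
    show "ereal a * ereal (dist (s k) (s (Suc k))) \<le> step_cost s k"
      unfolding step_cost_def using Suc.prems by (intro ereal_mult_right_mono) auto
  qed (use Suc in auto)
  finally show ?case by simp
qed simp

lemma chain_exits_ball:
  assumes "ball x r \<subseteq> {z. ereal M < l z}" and "0 < M" and "s \<in> admissible_chains y"
  obtains z where "z \<notin> ball x r" and "ereal (M * dist y z) + min_cost z \<le> chain_cost s"
proof -
  have "\<forall>\<^sub>F n in sequentially. l (s n) < ereal M"
    using assms(2,3) by (intro order_tendstoD(2)) (auto simp: admissible_chains_def)
  then obtain N where "l (s N) < ereal M"
    by (auto simp: eventually_sequentially)
  then have "s N \<notin> ball x r"
    using assms(1) by auto
  define k where "k = (LEAST n. s n \<notin> ball x r)"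
  have "s k \<notin> ball x r"
    unfolding k_def by (rule LeastI[of _ N]) fact
  have "ereal M \<le> l (s i)" if "i < k" for i
    using not_less_Least[of i "\<lambda>n. s n \<notin> ball x r"] that assms(1) unfolding k_def by force
  then have "ereal (M * dist y (s k)) \<le> (\<Sum>n<k. step_cost s n)"
    using prefix_cost_ge_dist[of M k s] assms(2,3) by (simp add: admissible_chains_def)
  then have "ereal (M * dist y (s k)) + min_cost (s k) \<le> (\<Sum>n<k. step_cost s n) + min_cost (s k)"
    by (rule add_right_mono)
  also have "\<dots> \<le> chain_cost s"
    by (rule prefix_cost_add_min_cost_le[OF assms(3)])
  finally have "ereal (M * dist y (s k)) + min_cost (s k) \<le> chain_cost s" .
  with \<open>s k \<notin> ball x r\<close> show thesis by (rule that)
qed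

lemma INF_min_cost_eq_0:
  assumes "H0 l"
  shows "(INF x. min_cost x) = 0"
proof (rule antisym)
  obtain s where "chain_cost s < \<infinity>" and "(\<lambda>n. l (s n)) \<longlonglongrightarrow> 0"
    using assms unfolding H0_def chain_cost_def step_cost_def by blast
  then have s: "s \<in> admissible_chains (s 0)"
    by (simp add: admissible_chains_def)
  have "(\<lambda>k. \<Sum>n. step_cost s (n + k)) \<longlonglongrightarrow> 0"
    using \<open>chain_cost s < \<infinity>\<close> unfolding chain_cost_def
    by (intro suminf_ereal_tail_LIMSEQ_zero step_cost_nonneg) simp
  moreover have "(INF x. min_cost x) \<le> (\<Sum>n. step_cost s (n + k))" for k
  proof -
    have "(INF x. min_cost x) \<le> min_cost (s k)"
      by (rule INF_lower) simp
    also have "\<dots> \<le> chain_cost (\<lambda>n. s (n + k))"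
      by (intro min_cost_le_chain_cost admissible_chains_shift[OF s])
    finally show ?thesis
      by (simp add: chain_cost_def step_cost_def)
  qed
  ultimately show "(INF x. min_cost x) \<le> 0"
    by (intro LIMSEQ_le_const) auto
qed (auto intro: INF_greatest min_cost_nonneg)

lemma min_cost_finite:
  assumes "H0 l" and "l x \<noteq> \<infinity>"
  shows "min_cost x \<noteq> \<infinity>"
proof -
  have "(INF y. min_cost y) < \<infinity>"
    using INF_min_cost_eq_0[OF assms(1)] by simp
  then obtain y where "min_cost y < \<infinity>"
    unfolding INF_less_iff by blast
  moreover have "min_cost x \<le> l x * ereal (dist x y) + min_cost y"
    by (rule min_cost_triangle)
  moreover have "l x * ereal (dist x y) \<noteq> \<infinity>"
    using assms(2) l_nonneg[of x] by (cases "l x") auto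
  ultimately show ?thesis
    using l_nonneg[of x] min_cost_nonneg[of y] by auto
qed

lemma lsc_hull_min_cost_nonneg: "0 \<le> lsc_hull min_cost x"
  by (rule lsc_hull_greatest) (rule min_cost_nonneg)

lemma lsc_hull_min_cost_triangle:
  assumes "H0 l"
  shows "lsc_hull min_cost x \<le> l x * ereal (dist x y) + lsc_hull min_cost y"
proof (cases "x = y \<or> l x = \<infinity>")
  case True
  then show ?thesis
    using lsc_hull_min_cost_nonneg[of y] by (auto simp flip: zero_ereal_def)
next
  case False
  then obtain c U where c: "l x = ereal c" and U: "min_cost x = ereal U"
    using l_nonneg[of x] min_cost_finite[OF assms, of x] min_cost_nonneg[of x]
    by (cases "l x"; cases "min_cost x") auto
  let ?g = "\<lambda>z. U - c * dist x z"
  have "ereal (?g z) \<le> min_cost z" for z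
    using min_cost_triangle[of x z] c U by (cases "min_cost z") (auto simp: algebra_simps)
  then have "ereal (?g y) \<le> lsc_hull min_cost y"
    by (intro continuous_minorant_le_lsc_hull continuous_intros)
  then have "ereal U \<le> l x * ereal (dist x y) + lsc_hull min_cost y"
    using c by (cases "lsc_hull min_cost y") (auto simp: algebra_simps)
  then show ?thesis
    using lsc_hull_le[of min_cost x] U by simp
qed

lemma lsc_hull_min_cost_descent:
  assumes "lsc l" and vx: "lsc_hull min_cost x = ereal X" and "0 < b" and "ereal b < l x"
  obtains z where "z \<noteq> x" and "ereal (b * dist x z) + lsc_hull min_cost z \<le> lsc_hull min_cost x"
proof -
  obtain M where "b < M" and "ereal M < l x"
    using ereal_dense2[OF \<open>ereal b < l x\<close>] by auto
  obtain r where "0 < r" and r: "ball x r \<subseteq> {z. ereal M < l z}"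
    using \<open>lsc l\<close> \<open>ereal M < l x\<close> unfolding lsc_def open_contains_ball by blast
  \<comment> \<open>A chain starting within \<delta> of x must pay at least M per unit length to leave the
    ball; the choice of \<delta> makes this outweigh both its offset from x and the slack \<delta> in its cost.\<close>
  define \<delta> where "\<delta> = (M - b) * r / (M + 1)"
  have "0 < \<delta>" and "(M + 1) * \<delta> = (M - b) * r"
    using \<open>0 < b\<close> \<open>b < M\<close> \<open>0 < r\<close> by (simp_all add: \<delta>_def)
  have "(INF y\<in>ball x \<delta>. min_cost y) \<le> ereal X"
    using INF_ball_le_lsc_hull[OF \<open>0 < \<delta>\<close>, of min_cost x] vx by simp
  also have "\<dots> < ereal (X + \<delta>)"
    using \<open>0 < \<delta>\<close> by simp
  finally obtain y s where "dist x y < \<delta>" and s: "s \<in> admissible_chains y"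
    and "chain_cost s < ereal (X + \<delta>)"
    unfolding INF_less_iff min_cost_def by auto
  have "0 < M"
    using \<open>0 < b\<close> \<open>b < M\<close> by simp
  obtain z where "z \<notin> ball x r" and "ereal (M * dist y z) + min_cost z \<le> chain_cost s"
    by (rule chain_exits_ball[OF r \<open>0 < M\<close> s])
  then have "ereal (M * dist y z) + lsc_hull min_cost z < ereal (X + \<delta>)"
    using add_left_mono[OF lsc_hull_le[of min_cost z], of "ereal (M * dist y z)"] \<open>chain_cost s < _\<close>
    by order
  then obtain Z where vz: "lsc_hull min_cost z = ereal Z" and "M * dist y z + Z < X + \<delta>"
    using lsc_hull_min_cost_nonneg[of z] by (cases "lsc_hull min_cost z") auto
  moreover have "dist x z - \<delta> \<le> dist y z" and "r \<le> dist x z"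
    using dist_triangle[of x z y] \<open>dist x y < \<delta>\<close> \<open>z \<notin> ball x r\<close> by auto
  ultimately have "b * dist x z + Z \<le> X"
    using mult_left_mono[OF \<open>dist x z - \<delta> \<le> dist y z\<close>, of M]
      mult_left_mono[OF \<open>r \<le> dist x z\<close>, of "M - b"] \<open>(M + 1) * \<delta> = (M - b) * r\<close> \<open>b < M\<close> \<open>0 < b\<close>
    by (simp add: algebra_simps)
  moreover have "z \<noteq> x"
    using \<open>0 < r\<close> \<open>z \<notin> ball x r\<close> by auto
  ultimately show thesis
    using that vx vz by simp
qed

lemma global_slope_lsc_hull_min_cost:
  assumes "lsc l" and "H0 l"
  shows "global_slope (lsc_hull min_cost) x = l x"
proof (cases "lsc_hull min_cost x")
  case (real X)
  show ?thesis
  proof (rule global_slope_eqI[where u = "lsc_hull min_cost", OF real l_nonneg])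
    show "lsc_hull min_cost y \<noteq> -\<infinity>" for y
      using lsc_hull_min_cost_nonneg[of y] by auto
    show "lsc_hull min_cost x \<le> l x * ereal (dist x y) + lsc_hull min_cost y" for y
      by (rule lsc_hull_min_cost_triangle[OF assms(2)])
    show "\<exists>z. z \<noteq> x \<and> ereal (b * dist x z) + lsc_hull min_cost z \<le> lsc_hull min_cost x"
      if "0 < b" and "ereal b < l x" for b
      using lsc_hull_min_cost_descent[OF assms(1) real that] by blast
  qed
next
  case PInf
  then have "l x = \<infinity>"
    using min_cost_finite[OF assms(2)] lsc_hull_le[of min_cost x] by force
  with PInf show ?thesis
    by (simp add: global_slope_def)
next
  case MInf
  then show ?thesis
    using lsc_hull_min_cost_nonneg[of x] by simp
qed

end

theorem proposition6p9:
  fixes l :: "'a::metric_space \<Rightarrow> ereal"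
  assumes "\<And>x. l x \<ge> 0"
    and "lsc l"
    and "H0 l"
  shows "\<exists>u :: 'a \<Rightarrow> ereal. (\<forall>x. u x \<noteq> -\<infinity>) \<and> lsc u \<and>
           (INF x. u x) = 0 \<and> (\<forall>x. global_slope u x = l x)"
proof -
  interpret nonneg_weight l
    using assms(1) by unfold_locales
  have "lsc_hull min_cost x \<noteq> -\<infinity>" for x
    using lsc_hull_min_cost_nonneg[of x] by auto
  moreover have "(INF x. lsc_hull min_cost x) = 0"
    using INF_min_cost_eq_0[OF assms(3)] by (simp add: INF_lsc_hull)
  ultimately show ?thesis
    using lsc_lsc_hull global_slope_lsc_hull_min_cost[OF assms(2,3)] by blast
qed

end
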